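(* The solitary mechanism satisfies weak UIC, weak MIC, and $c$-weak-SCP for every integer $c\ge1$, for any block size $B\ge2$ (finite or infinite).
   Context: Setting (TFM). Each user $i$ has a true value $v_i\ge0$ and submits a single bid $b_i\ge0$. A TFM consists of an inclusion rule (run by the miner, choosing at most $B$ bids to include) and confirmation, payment and miner-revenue rules (run by the blockchain on the included bids). Solitary mechanism: include the two highest bids (a missing bid counts as $0$); only the highest included bid is confirmed, and it pays the second-highest included bid; the miner is paid the second-highest included bid. Strategic players: a user, the miner, or the miner with some users; they may have users bid untruthfully after seeing all bids, inject fake bids (true value $0$), and (if the miner is involved) include any at most $B$ available bids. Weak ($1$-strict) utility: miner revenue (if the miner is in the player) plus $v-p$ for each confirmed transaction of the player (true value $v$, payment $p$), minus $(b-v)$ for each unconfirmed transaction of the player with bid $b>v$. Weak UIC: with an honest miner, each user's weak utility is maximized by truthful bidding without fake bids, whatever the other bids. Weak MIC: the miner's weak utility is maximized by honestly following the inclusion rule without fake bids, whatever the bids. $c$-weak-SCP: for every coalition of the miner with between $1$ and $c$ users, joint weak utility is maximized by truthful bidding and honest miner behavior, whatever the other bids. *)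

theory Defs
  imports Complex_Main "HOL-Library.Extended_Nat"
begin

(* A transaction in the pool: (bid, owner).  owner = Some v means the
   transaction belongs to the strategic player and has true value v
   (fake bids have true value 0); owner = None means it belongs to some
   other (non-strategic) user. *)
type_synonym tx = "real \<times> real option"

definition nonneg :: "real list \<Rightarrow> bool" where
  "nonneg xs \<longleftrightarrow> (\<forall>x\<in>set xs. 0 \<le> x)"

definition others_txs :: "real list \<Rightarrow> tx list" where
  "others_txs bs = map (\<lambda>b. (b, None)) bs"

definition player_txs :: "real list \<Rightarrow> real list \<Rightarrow> real list \<Rightarrow> tx list" where
  "player_txs vs bs' fs = map (\<lambda>(v, b). (b, Some v)) (zip vs bs') @ map (\<lambda>f. (f, Some 0)) fs"

definition honest_inclusion :: "tx list \<Rightarrow> nat set \<Rightarrow> bool" where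
  "honest_inclusion txs I \<longleftrightarrow>
     I \<subseteq> {..<length txs} \<and> card I = min 2 (length txs) \<and>
     (\<forall>i\<in>I. \<forall>k\<in>{..<length txs} - I. fst (txs ! k) \<le> fst (txs ! i))"

(* arbitrary (possibly dishonest) inclusion of at most B available bids *)
definition valid_inclusion :: "enat \<Rightarrow> tx list \<Rightarrow> nat set \<Rightarrow> bool" where
  "valid_inclusion B txs I \<longleftrightarrow> I \<subseteq> {..<length txs} \<and> enat (card I) \<le> B"

definition valid_confirm :: "tx list \<Rightarrow> nat set \<Rightarrow> nat option \<Rightarrow> bool" where
  "valid_confirm txs I c \<longleftrightarrow>
     (case c of None \<Rightarrow> I = {}
      | Some j \<Rightarrow> j \<in> I \<and> (\<forall>k\<in>I. fst (txs ! k) \<le> fst (txs ! j)))"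

(* payment of the confirmed bid = second-highest included bid (missing = 0);
   the miner's revenue equals this amount *)
definition payment :: "tx list \<Rightarrow> nat set \<Rightarrow> nat option \<Rightarrow> real" where
  "payment txs I c =
     (case c of None \<Rightarrow> 0
      | Some j \<Rightarrow> Max (insert 0 ((\<lambda>k. fst (txs ! k)) ` (I - {j}))))"

definition weak_utility :: "bool \<Rightarrow> tx list \<Rightarrow> nat set \<Rightarrow> nat option \<Rightarrow> real" where
  "weak_utility miner txs I c =
     (if miner then payment txs I c else 0) +
     (\<Sum>i<length txs. (case snd (txs ! i) of None \<Rightarrow> 0
        | Some v \<Rightarrow> (if c = Some i then v - payment txs I c
                     else if fst (txs ! i) > v then - (fst (txs ! i) - v) else 0)))"

definition weak_UIC :: bool where
  "weak_UIC \<longleftrightarrow>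
    (\<forall>v bs b fs I c I' c'.
       0 \<le> v \<longrightarrow> nonneg bs \<longrightarrow> 0 \<le> b \<longrightarrow> nonneg fs \<longrightarrow>
       honest_inclusion (player_txs [v] [v] [] @ others_txs bs) I \<longrightarrow>
       valid_confirm (player_txs [v] [v] [] @ others_txs bs) I c \<longrightarrow>
       honest_inclusion (player_txs [v] [b] fs @ others_txs bs) I' \<longrightarrow>
       valid_confirm (player_txs [v] [b] fs @ others_txs bs) I' c' \<longrightarrow>
       weak_utility False (player_txs [v] [b] fs @ others_txs bs) I' c'
         \<le> weak_utility False (player_txs [v] [v] [] @ others_txs bs) I c)"

definition weak_MIC :: "enat \<Rightarrow> bool" where
  "weak_MIC B \<longleftrightarrow>
    (\<forall>bs fs I c I' c'.
       nonneg bs \<longrightarrow> nonneg fs \<longrightarrow>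
       honest_inclusion (others_txs bs) I \<longrightarrow>
       valid_confirm (others_txs bs) I c \<longrightarrow>
       valid_inclusion B (player_txs [] [] fs @ others_txs bs) I' \<longrightarrow>
       valid_confirm (player_txs [] [] fs @ others_txs bs) I' c' \<longrightarrow>
       weak_utility True (player_txs [] [] fs @ others_txs bs) I' c'
         \<le> weak_utility True (others_txs bs) I c)"

definition weak_SCP :: "nat \<Rightarrow> enat \<Rightarrow> bool" where
  "weak_SCP c B \<longleftrightarrow>
    (\<forall>vs bs' bs fs I cf I' cf'.
       1 \<le> length vs \<longrightarrow> length vs \<le> c \<longrightarrow> length bs' = length vs \<longrightarrow>
       nonneg vs \<longrightarrow> nonneg bs' \<longrightarrow> nonneg bs \<longrightarrow> nonneg fs \<longrightarrow>
       honest_inclusion (player_txs vs vs [] @ others_txs bs) I \<longrightarrow>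
       valid_confirm (player_txs vs vs [] @ others_txs bs) I cf \<longrightarrow>
       valid_inclusion B (player_txs vs bs' fs @ others_txs bs) I' \<longrightarrow>
       valid_confirm (player_txs vs bs' fs @ others_txs bs) I' cf' \<longrightarrow>
       weak_utility True (player_txs vs bs' fs @ others_txs bs) I' cf'
         \<le> weak_utility True (player_txs vs vs [] @ others_txs bs) I cf)"

end

theory Submission
  imports Defs
begin

(*
  Whatever a coalition does, its weak utility is at most zero, one of its own true values, or
  a bid of another user that is outbid by a further bid of another user: the miner is paid an
  included bid other than the confirmed one, the confirmed transaction pays that same amount,
  and an unconfirmed overbid costs its excess. Honest, truthful play already secures each of
  these amounts, since the two highest bids are included, the highest one is confirmed, and
  the miner collects the second highest. For a single user, a deviation can only help if her
  own transaction wins at a price that is at least every other bid and below her value; but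
  then her truthful bid wins at no higher price.
*)

definition tx_utility :: "tx list \<Rightarrow> nat set \<Rightarrow> nat option \<Rightarrow> nat \<Rightarrow> real" where
  "tx_utility txs I c i = (case snd (txs ! i) of None \<Rightarrow> 0
     | Some v \<Rightarrow> if c = Some i then v - payment txs I c
                else if fst (txs ! i) > v then - (fst (txs ! i) - v) else 0)"

lemma weak_utility_eq_sum:
  "weak_utility m txs I c = (if m then payment txs I c else 0) + (\<Sum>i<length txs. tx_utility txs I c i)"
  unfolding weak_utility_def tx_utility_def by simp

lemma tx_utility_unconfirmed_nonpos: "c \<noteq> Some i \<Longrightarrow> tx_utility txs I c i \<le> 0"
  unfolding tx_utility_def by (auto split: option.splits)

lemma tx_utility_unconfirmed_le:
  "c \<noteq> Some i \<Longrightarrow> snd (txs ! i) = Some v \<Longrightarrow> tx_utility txs I c i \<le> v - fst (txs ! i)"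
  unfolding tx_utility_def by auto

lemma tx_utility_unconfirmed_truthful:
  "c \<noteq> Some i \<Longrightarrow> (\<And>v. snd (txs ! i) = Some v \<Longrightarrow> fst (txs ! i) = v) \<Longrightarrow> tx_utility txs I c i = 0"
  unfolding tx_utility_def by (auto split: option.splits)

lemma tx_utility_confirmed:
  "snd (txs ! j) = Some v \<Longrightarrow> tx_utility txs I (Some j) j = v - payment txs I (Some j)"
  unfolding tx_utility_def by auto

lemma tx_utility_other: "snd (txs ! i) = None \<Longrightarrow> tx_utility txs I c i = 0"
  unfolding tx_utility_def by auto

lemma sum_le_sum_subset_nonpos:
  fixes f :: "'a \<Rightarrow> 'b :: ordered_comm_monoid_add"
  assumes "finite A" "S \<subseteq> A" "\<And>i. i \<in> A - S \<Longrightarrow> f i \<le> 0"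
  shows "sum f A \<le> sum f S"
proof -
  have "sum f A = sum f (A - S) + sum f S"
    using assms(1,2) by (simp add: sum.subset_diff)
  moreover have "sum f (A - S) \<le> 0"
    using assms(3) by (rule sum_nonpos)
  ultimately show ?thesis
    by (simp add: add_decreasing)
qed

lemma weak_utility_le_sum_subset:
  assumes "S \<subseteq> {..<length txs}" "\<And>i. c = Some i \<Longrightarrow> i \<in> S"
  shows "weak_utility m txs I c \<le> (if m then payment txs I c else 0) + sum (tx_utility txs I c) S"
proof -
  have "(\<Sum>i<length txs. tx_utility txs I c i) \<le> sum (tx_utility txs I c) S"
    using assms by (intro sum_le_sum_subset_nonpos tx_utility_unconfirmed_nonpos) auto
  then show ?thesis
    by (simp add: weak_utility_eq_sum)
qed

lemma payment_None [simp]: "payment txs I None = 0"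
  unfolding payment_def by simp

lemma payment_nonneg: "finite I \<Longrightarrow> 0 \<le> payment txs I c"
  unfolding payment_def by (auto split: option.splits)

lemma payment_ge: "finite I \<Longrightarrow> k \<in> I \<Longrightarrow> k \<noteq> j \<Longrightarrow> fst (txs ! k) \<le> payment txs I (Some j)"
  unfolding payment_def by (auto intro: Max_ge)

lemma payment_le:
  "finite I \<Longrightarrow> (\<And>k. k \<in> I - {j} \<Longrightarrow> fst (txs ! k) \<le> x) \<Longrightarrow> 0 \<le> x \<Longrightarrow> payment txs I (Some j) \<le> x"
  unfolding payment_def by (simp add: Max_le_iff)

lemma payment_zero_or_bid:
  assumes "finite I"
  obtains "payment txs I (Some j) = 0" | k where "k \<in> I" "k \<noteq> j" "payment txs I (Some j) = fst (txs ! k)"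
proof -
  have "Max (insert 0 ((\<lambda>k. fst (txs ! k)) ` (I - {j}))) \<in> insert 0 ((\<lambda>k. fst (txs ! k)) ` (I - {j}))"
    using assms by (intro Max_in) auto
  then show ?thesis
    using that unfolding payment_def by auto
qed

lemma valid_confirm_Some:
  "valid_confirm txs I (Some j) \<Longrightarrow> j \<in> I \<and> (\<forall>k\<in>I. fst (txs ! k) \<le> fst (txs ! j))"
  unfolding valid_confirm_def by simp

lemma payment_le_confirmed_bid:
  "finite I \<Longrightarrow> valid_confirm txs I (Some j) \<Longrightarrow> 0 \<le> fst (txs ! j) \<Longrightarrow> payment txs I (Some j) \<le> fst (txs ! j)"
  by (intro payment_le) (auto dest: valid_confirm_Some)

lemma miner_coalition_utility_le:
  assumes I: "I \<subseteq> {..<length txs}" and vc: "valid_confirm txs I c"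
  shows "weak_utility True txs I c \<le> 0
    \<or> (\<exists>b v. (b, Some v) \<in> set txs \<and> weak_utility True txs I c \<le> v)
    \<or> (\<exists>j<length txs. \<exists>k<length txs. j \<noteq> k \<and> snd (txs ! j) = None \<and> snd (txs ! k) = None
         \<and> weak_utility True txs I c \<le> fst (txs ! k) \<and> fst (txs ! k) \<le> fst (txs ! j))"
    (is "?U \<le> 0 \<or> ?value \<or> _")
proof (cases c)
  case None
  then show ?thesis
    using weak_utility_le_sum_subset[of "{}" txs c True I] by simp
next
  case (Some j)
  have fin: "finite I" using I finite_subset by blast
  have jI: "j \<in> I" and jmax: "\<forall>k\<in>I. fst (txs ! k) \<le> fst (txs ! j)"
    using vc Some by (auto dest: valid_confirm_Some)
  have j: "j < length txs" using I jI by auto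
  let ?p = "payment txs I c" and ?t = "tx_utility txs I c"
  have value_bound: "?value" if "i < length txs" "snd (txs ! i) = Some v" "?U \<le> v" for i v
    using that by (metis nth_mem prod.collapse)
  show ?thesis
  proof (cases rule: payment_zero_or_bid[OF fin, of txs j])
    case 1
    have "?U \<le> ?t j"
      using weak_utility_le_sum_subset[of "{j}" txs c True I] 1 j Some by simp
    then show ?thesis
      using value_bound[OF j] 1 Some
      by (cases "snd (txs ! j)") (auto simp: tx_utility_other tx_utility_confirmed)
  next
    case (2 k)
    have k: "k < length txs" using I 2 by auto
    have U: "?U \<le> ?p + ?t j + ?t k"
      using weak_utility_le_sum_subset[of "{j, k}" txs c True I] 2 j k Some by simp
    have tk: "?t k \<le> 0" using 2 Some by (intro tx_utility_unconfirmed_nonpos) simp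
    show ?thesis
    proof (cases "snd (txs ! j)")
      case (Some v)
      then have "?U \<le> v"
        using U tk \<open>c = Some j\<close> by (simp add: tx_utility_confirmed)
      then show ?thesis using value_bound[OF j Some] by blast
    next
      case None
      then have U': "?U \<le> fst (txs ! k) + ?t k"
        using U 2 \<open>c = Some j\<close> by (simp add: tx_utility_other)
      show ?thesis
      proof (cases "snd (txs ! k)")
        case k_other: None
        have "fst (txs ! k) \<le> fst (txs ! j)" using jmax 2 by blast
        moreover have "?U \<le> fst (txs ! k)" using U' tk by linarith
        ultimately show ?thesis using j k 2 None k_other by blast
      next
        case (Some w)
        have "?t k \<le> w - fst (txs ! k)"
          using 2 \<open>c = Some j\<close> Some by (intro tx_utility_unconfirmed_le) auto
        then show ?thesis using U' value_bound[OF k Some] by auto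
      qed
    qed
  qed
qed

definition truthful_nonneg :: "tx list \<Rightarrow> bool" where
  "truthful_nonneg txs \<longleftrightarrow> (\<forall>t \<in> set txs. 0 \<le> fst t \<and> (\<forall>v. snd t = Some v \<longrightarrow> fst t = v))"

lemma truthful_nonnegD:
  assumes "truthful_nonneg txs" "i < length txs"
  shows "0 \<le> fst (txs ! i)" and "snd (txs ! i) = Some v \<Longrightarrow> fst (txs ! i) = v"
  using assms nth_mem[OF assms(2)] unfolding truthful_nonneg_def by auto

lemma honest_inclusion_finite: "honest_inclusion txs I \<Longrightarrow> finite I"
  unfolding honest_inclusion_def using finite_subset by blast

lemma honest_confirmed_Some:
  assumes "honest_inclusion txs I" "valid_confirm txs I c" "txs \<noteq> []"
  obtains m where "c = Some m"
  using assms by (cases c) (auto simp: honest_inclusion_def valid_confirm_def min_def split: if_splits)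

lemma honest_utility_empty: "honest_inclusion [] I \<Longrightarrow> valid_confirm [] I c \<Longrightarrow> weak_utility m [] I c = 0"
  by (cases c) (auto simp: honest_inclusion_def valid_confirm_def weak_utility_def)

lemma honest_confirmed_bids:
  assumes h: "honest_inclusion txs I" and vc: "valid_confirm txs I (Some m)"
  shows "m < length txs"
    and "\<And>a. a < length txs \<Longrightarrow> fst (txs ! a) \<le> fst (txs ! m)"
    and "\<And>a. a < length txs \<Longrightarrow> a \<noteq> m \<Longrightarrow> fst (txs ! a) \<le> payment txs I (Some m)"
proof -
  have I: "I \<subseteq> {..<length txs}" and card: "card I = min 2 (length txs)"
    and top: "\<forall>i\<in>I. \<forall>k\<in>{..<length txs} - I. fst (txs ! k) \<le> fst (txs ! i)"
    using h unfolding honest_inclusion_def by auto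
  have fin: "finite I" using h by (rule honest_inclusion_finite)
  have mI: "m \<in> I" and mmax: "\<forall>k\<in>I. fst (txs ! k) \<le> fst (txs ! m)"
    using vc by (auto dest: valid_confirm_Some)
  show "m < length txs" using mI I by auto
  show "\<And>a. a < length txs \<Longrightarrow> fst (txs ! a) \<le> fst (txs ! m)"
    using mmax top mI by (metis DiffI lessThan_iff)
  fix a assume a: "a < length txs" "a \<noteq> m"
  show "fst (txs ! a) \<le> payment txs I (Some m)"
  proof (cases "a \<in> I")
    case True
    then show ?thesis using payment_ge[OF fin] a by auto
  next
    case False
    have "2 \<le> length txs" using a \<open>m < length txs\<close> by linarith
    then have "card I = 2" using card by simp
    then obtain x y where "I = {x, y}" "x \<noteq> y" by (auto simp: card_2_iff)
    then obtain i where i: "i \<in> I" "i \<noteq> m" by blast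
    have "fst (txs ! a) \<le> fst (txs ! i)" using top i False a by auto
    also have "\<dots> \<le> payment txs I (Some m)" using payment_ge[OF fin i] .
    finally show ?thesis .
  qed
qed

lemma weak_utility_honest_truthful:
  assumes h: "honest_inclusion txs I" and vc: "valid_confirm txs I (Some m)"
    and tr: "truthful_nonneg txs"
  shows "weak_utility mi txs I (Some m) = (if mi then payment txs I (Some m) else 0)
           + (case snd (txs ! m) of None \<Rightarrow> 0 | Some v \<Rightarrow> v - payment txs I (Some m))"
proof -
  have m: "m < length txs" using honest_confirmed_bids(1)[OF h vc] .
  have "(\<Sum>i<length txs. tx_utility txs I (Some m) i) = tx_utility txs I (Some m) m"
    using m truthful_nonnegD(2)[OF tr]
    by (subst sum.mono_neutral_right[where S="{m}"]) (auto intro: tx_utility_unconfirmed_truthful)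
  then show ?thesis
    by (cases "snd (txs ! m)") (simp_all add: weak_utility_eq_sum tx_utility_other tx_utility_confirmed)
qed

lemma user_utility_le:
  assumes h: "honest_inclusion txs I" and vc: "valid_confirm txs I c"
  shows "weak_utility False txs I c \<le> 0
    \<or> (\<exists>b v p. (b, Some v) \<in> set txs \<and> 0 \<le> p \<and> weak_utility False txs I c \<le> v - p
         \<and> (\<forall>b'. (b', None) \<in> set txs \<longrightarrow> b' \<le> p))"
    (is "?U \<le> 0 \<or> _")
proof (cases c)
  case None
  then show ?thesis
    using weak_utility_le_sum_subset[of "{}" txs c False I] by simp
next
  case (Some j)
  have j: "j < length txs" using honest_confirmed_bids(1)[OF h vc[unfolded Some]] .
  have U: "?U \<le> tx_utility txs I c j"
    using weak_utility_le_sum_subset[of "{j}" txs c False I] j Some by simp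
  show ?thesis
  proof (cases "snd (txs ! j)")
    case None
    then show ?thesis using U by (simp add: tx_utility_other)
  next
    case (Some v)
    let ?p = "payment txs I c"
    have "(fst (txs ! j), Some v) \<in> set txs" using j Some by (metis nth_mem prod.collapse)
    moreover have "0 \<le> ?p" using payment_nonneg[OF honest_inclusion_finite[OF h]] .
    moreover have "?U \<le> v - ?p" using U Some \<open>c = Some j\<close> by (simp add: tx_utility_confirmed)
    moreover have "b' \<le> ?p" if "(b', None) \<in> set txs" for b'
    proof -
      from that obtain a where a: "a < length txs" "txs ! a = (b', None)"
        unfolding in_set_conv_nth by blast
      have "a \<noteq> j" using a(2) \<open>snd (txs ! j) = Some v\<close> by auto
      have "fst (txs ! a) \<le> payment txs I (Some j)"
        using honest_confirmed_bids(3)[OF h vc[unfolded \<open>c = Some j\<close>] a(1) \<open>a \<noteq> j\<close>] .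
      then show ?thesis using a(2) \<open>c = Some j\<close> by simp
    qed
    ultimately show ?thesis by blast
  qed
qed

lemma honest_utility_nonneg:
  assumes h: "honest_inclusion txs I" and vc: "valid_confirm txs I c" and tr: "truthful_nonneg txs"
  shows "0 \<le> weak_utility mi txs I c"
proof (cases "txs = []")
  case True
  then show ?thesis using h vc honest_utility_empty by simp
next
  case False
  then obtain m where m: "c = Some m" using honest_confirmed_Some[OF h vc] by blast
  note vc_m = vc[unfolded m]
  have m_len: "m < length txs" using honest_confirmed_bids(1)[OF h vc_m] .
  have fin: "finite I" using h by (rule honest_inclusion_finite)
  have "payment txs I (Some m) \<le> fst (txs ! m)"
    using payment_le_confirmed_bid[OF fin vc_m truthful_nonnegD(1)[OF tr m_len]] .
  then show ?thesis
    using weak_utility_honest_truthful[OF h vc_m tr, of mi] payment_nonneg[OF fin, of txs "Some m"]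
      truthful_nonnegD(2)[OF tr m_len] m
    by (auto split: option.split)
qed

lemma honest_miner_utility_ge_bid:
  assumes h: "honest_inclusion txs I" and vc: "valid_confirm txs I (Some m)"
    and tr: "truthful_nonneg txs"
    and k: "k < length txs" "k \<noteq> m \<or> snd (txs ! m) \<noteq> None"
  shows "fst (txs ! k) \<le> weak_utility True txs I (Some m)"
proof (cases "snd (txs ! m)")
  case None
  then show ?thesis
    using weak_utility_honest_truthful[OF h vc tr, of True] honest_confirmed_bids(3)[OF h vc] k by simp
next
  case (Some v)
  have m: "m < length txs" using honest_confirmed_bids(1)[OF h vc] .
  then show ?thesis
    using weak_utility_honest_truthful[OF h vc tr, of True] honest_confirmed_bids(2)[OF h vc k(1)]
      truthful_nonnegD(2)[OF tr m Some] Some by simp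
qed

lemma honest_miner_utility_ge_value:
  assumes h: "honest_inclusion txs I" and vc: "valid_confirm txs I c"
    and tr: "truthful_nonneg txs" and v: "(b, Some v) \<in> set txs"
  shows "v \<le> weak_utility True txs I c"
proof -
  obtain i where i: "i < length txs" "txs ! i = (b, Some v)" using v by (auto simp: in_set_conv_nth)
  obtain m where m: "c = Some m" using honest_confirmed_Some[OF h vc] i by fastforce
  have "i \<noteq> m \<or> snd (txs ! m) \<noteq> None" using i by auto
  then have "fst (txs ! i) \<le> weak_utility True txs I c"
    using honest_miner_utility_ge_bid[OF h vc[unfolded m] tr i(1)] m by simp
  moreover have "fst (txs ! i) = v" using truthful_nonnegD(2)[OF tr i(1)] i(2) by simp
  ultimately show ?thesis by simp
qed

lemma honest_miner_utility_ge_outbid: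
  assumes h: "honest_inclusion txs I" and vc: "valid_confirm txs I c"
    and tr: "truthful_nonneg txs"
    and jk: "j < length txs" "k < length txs" "j \<noteq> k" "fst (txs ! k) \<le> fst (txs ! j)"
  shows "fst (txs ! k) \<le> weak_utility True txs I c"
proof -
  obtain m where m: "c = Some m" using honest_confirmed_Some[OF h vc] jk by fastforce
  note bid_le = honest_miner_utility_ge_bid[OF h vc[unfolded m] tr]
  show ?thesis
  proof (cases "k = m")
    case True
    then show ?thesis using bid_le[OF jk(1)] jk m by simp
  next
    case False
    then show ?thesis using bid_le[OF jk(2)] m by simp
  qed
qed

lemma honest_user_utility_ge:
  assumes h: "honest_inclusion txs I" and vc: "valid_confirm txs I c"
    and tr: "truthful_nonneg txs"
    and i: "i < length txs" "snd (txs ! i) = Some v"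
    and x: "0 \<le> x" "\<And>k. k < length txs \<Longrightarrow> k \<noteq> i \<Longrightarrow> fst (txs ! k) \<le> x"
  shows "v - x \<le> weak_utility False txs I c"
proof (cases "v \<le> x")
  case True
  then show ?thesis using honest_utility_nonneg[OF h vc tr, of False] by simp
next
  case False
  obtain m where m: "c = Some m" using honest_confirmed_Some[OF h vc] i by fastforce
  note vc_m = vc[unfolded m]
  have vi: "fst (txs ! i) = v" using truthful_nonnegD(2)[OF tr i] .
  have "m = i"
  proof (rule ccontr)
    assume "m \<noteq> i"
    then have "fst (txs ! m) \<le> x" using x(2) honest_confirmed_bids(1)[OF h vc_m] by simp
    moreover have "fst (txs ! i) \<le> fst (txs ! m)" using honest_confirmed_bids(2)[OF h vc_m i(1)] .
    ultimately show False using vi False by simp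
  qed
  have "payment txs I (Some i) \<le> x"
    using payment_le[OF honest_inclusion_finite[OF h] _ x(1)] x(2) h \<open>m = i\<close>
    unfolding honest_inclusion_def by blast
  then show ?thesis
    using weak_utility_honest_truthful[OF h vc_m tr, of False] i(2) m \<open>m = i\<close> by simp
qed

lemma length_player_others:
  "length bs' = length vs \<Longrightarrow> length (player_txs vs bs' fs @ others_txs bs) = length vs + length fs + length bs"
  unfolding player_txs_def others_txs_def by simp

lemma nth_player_others_other:
  "length bs' = length vs \<Longrightarrow> t < length bs \<Longrightarrow>
     (player_txs vs bs' fs @ others_txs bs) ! (length vs + length fs + t) = (bs ! t, None)"
  unfolding player_txs_def others_txs_def by (simp add: nth_append)

lemma player_others_other_index:
  assumes "length bs' = length vs" "i < length (player_txs vs bs' fs @ others_txs bs)"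
    and "snd ((player_txs vs bs' fs @ others_txs bs) ! i) = None"
  obtains t where "t < length bs" "i = length vs + length fs + t"
proof -
  have "\<not> i < length vs + length fs"
    using assms unfolding player_txs_def others_txs_def by (auto simp: nth_append split: if_splits)
  then show ?thesis
    using that assms(1,2) length_player_others[OF assms(1)] by (metis add_less_cancel_left le_Suc_ex not_le)
qed

lemma player_others_value:
  "(b, Some w) \<in> set (player_txs vs bs' fs @ others_txs bs) \<Longrightarrow> w \<in> set vs \<or> w = 0"
  unfolding player_txs_def others_txs_def by (auto dest: set_zip_leftD)

lemma player_others_other_bid:
  "(b, None) \<in> set (player_txs vs bs' fs @ others_txs bs) \<longleftrightarrow> b \<in> set bs"
  unfolding player_txs_def others_txs_def by auto

lemma truthful_player_others:
  "nonneg vs \<Longrightarrow> nonneg bs \<Longrightarrow> truthful_nonneg (player_txs vs vs [] @ others_txs bs)"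
  unfolding truthful_nonneg_def player_txs_def others_txs_def nonneg_def by (auto simp: zip_same)

lemma truthful_player_value: "w \<in> set vs \<Longrightarrow> (w, Some w) \<in> set (player_txs vs vs [] @ others_txs bs)"
  unfolding player_txs_def by (auto simp: zip_same)

lemma miner_coalition_no_gain:
  assumes len: "length bs' = length vs" and nv: "nonneg vs" and nb: "nonneg bs"
    and h: "honest_inclusion (player_txs vs vs [] @ others_txs bs) I"
    and vc: "valid_confirm (player_txs vs vs [] @ others_txs bs) I cf"
    and I': "I' \<subseteq> {..<length (player_txs vs bs' fs @ others_txs bs)}"
    and vc': "valid_confirm (player_txs vs bs' fs @ others_txs bs) I' cf'"
  shows "weak_utility True (player_txs vs bs' fs @ others_txs bs) I' cf'
         \<le> weak_utility True (player_txs vs vs [] @ others_txs bs) I cf"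
proof -
  define H where "H = player_txs vs vs [] @ others_txs bs"
  define D where "D = player_txs vs bs' fs @ others_txs bs"
  have tr: "truthful_nonneg H" unfolding H_def using nv nb by (rule truthful_player_others)
  let ?UH = "weak_utility True H I cf" and ?UD = "weak_utility True D I' cf'"
  have UH_nonneg: "0 \<le> ?UH" using honest_utility_nonneg[OF h[folded H_def] vc[folded H_def] tr] .
  from miner_coalition_utility_le[OF I'[folded D_def] vc'[folded D_def]]
  consider (nonpos) "?UD \<le> 0"
    | (player_value) b w where "(b, Some w) \<in> set D" "?UD \<le> w"
    | (outbid) j k where "j < length D" "k < length D" "j \<noteq> k" "snd (D ! j) = None"
        "snd (D ! k) = None" "?UD \<le> fst (D ! k)" "fst (D ! k) \<le> fst (D ! j)"
    by blast
  then have "?UD \<le> ?UH"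
  proof cases
    case nonpos
    then show ?thesis using UH_nonneg by simp
  next
    case player_value
    have "w \<le> ?UH"
    proof (cases "w = 0")
      case False
      then have "(w, Some w) \<in> set H"
        using player_others_value player_value(1) truthful_player_value unfolding D_def H_def by metis
      then show ?thesis using honest_miner_utility_ge_value[OF h[folded H_def] vc[folded H_def] tr] by blast
    qed (use UH_nonneg in simp)
    then show ?thesis using player_value(2) by simp
  next
    case outbid
    obtain tj where tj: "tj < length bs" "j = length vs + length fs + tj"
      using player_others_other_index[OF len] outbid(1,4) unfolding D_def by blast
    obtain tk where tk: "tk < length bs" "k = length vs + length fs + tk"
      using player_others_other_index[OF len] outbid(2,5) unfolding D_def by blast
    have D_nth: "D ! j = (bs ! tj, None)" "D ! k = (bs ! tk, None)"
      unfolding D_def using nth_player_others_other[OF len] tj tk by simp_all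
    have H_nth: "H ! (length vs + tj) = (bs ! tj, None)" "H ! (length vs + tk) = (bs ! tk, None)"
      unfolding H_def using nth_player_others_other[of vs vs _ bs "[]"] tj tk by simp_all
    have "bs ! tk \<le> ?UH"
      using honest_miner_utility_ge_outbid[OF h[folded H_def] vc[folded H_def] tr,
          of "length vs + tj" "length vs + tk"]
        H_nth D_nth outbid(3,7) tj tk length_player_others[of vs vs "[]" bs]
      unfolding H_def by simp
    then show ?thesis using outbid(6) D_nth by simp
  qed
  then show ?thesis unfolding H_def D_def .
qed

lemma weak_SCP_holds: "weak_SCP c B"
  unfolding weak_SCP_def valid_inclusion_def by (blast intro: miner_coalition_no_gain)

lemma weak_MIC_holds: "weak_MIC B"
proof -
  have "player_txs [] [] [] @ others_txs bs = others_txs bs" for bs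
    unfolding player_txs_def by simp
  then show ?thesis
    unfolding weak_MIC_def valid_inclusion_def
    using miner_coalition_no_gain[of "[]" "[]"] by (simp add: nonneg_def)
qed

lemma weak_UIC_holds: "weak_UIC"
  unfolding weak_UIC_def
proof (intro allI impI)
  fix v bs b fs I c I' c'
  define H where "H = player_txs [v] [v] [] @ others_txs bs"
  define D where "D = player_txs [v] [b] fs @ others_txs bs"
  assume v: "0 \<le> v" and bs: "nonneg bs" and "0 \<le> b" "nonneg fs"
    and h: "honest_inclusion (player_txs [v] [v] [] @ others_txs bs) I"
    and vc: "valid_confirm (player_txs [v] [v] [] @ others_txs bs) I c"
    and h': "honest_inclusion (player_txs [v] [b] fs @ others_txs bs) I'"
    and vc': "valid_confirm (player_txs [v] [b] fs @ others_txs bs) I' c'"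
  note h = h[folded H_def] and vc = vc[folded H_def]
  have tr: "truthful_nonneg H" unfolding H_def using v bs by (intro truthful_player_others) (simp_all add: nonneg_def)
  let ?UH = "weak_utility False H I c" and ?UD = "weak_utility False D I' c'"
  have UH_nonneg: "0 \<le> ?UH" using honest_utility_nonneg[OF h vc tr] .
  from user_utility_le[OF h'[folded D_def] vc'[folded D_def]]
  have "?UD \<le> ?UH"
  proof (elim disjE exE conjE)
    assume "?UD \<le> 0"
    then show ?thesis using UH_nonneg by simp
  next
    fix b0 w p
    assume w: "(b0, Some w) \<in> set D" and p: "0 \<le> p" "?UD \<le> w - p"
      and others_le: "\<forall>b'. (b', None) \<in> set D \<longrightarrow> b' \<le> p"
    have "w = v \<or> w = 0" using player_others_value[OF w[unfolded D_def]] by simp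
    moreover have "v - p \<le> ?UH"
    proof (rule honest_user_utility_ge[OF h vc tr, of 0 v p])
      show "0 < length H" and "snd (H ! 0) = Some v" unfolding H_def player_txs_def by simp_all
      fix k assume k: "k < length H" "k \<noteq> 0"
      then have "H ! (1 + 0 + (k - 1)) = (bs ! (k - 1), None)" "k - 1 < length bs"
        using nth_player_others_other[of "[v]" "[v]" "k - 1" bs "[]"]
          length_player_others[of "[v]" "[v]" "[]" bs] unfolding H_def by simp_all
      moreover have "(bs ! (k - 1), None) \<in> set D"
        unfolding D_def player_others_other_bid using \<open>k - 1 < length bs\<close> by simp
      ultimately show "fst (H ! k) \<le> p" using others_le k(2) by simp
    qed (rule p(1))
    ultimately show ?thesis using p UH_nonneg by auto
  qed
  then show "weak_utility False (player_txs [v] [b] fs @ others_txs bs) I' c'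
      \<le> weak_utility False (player_txs [v] [v] [] @ others_txs bs) I c"
    unfolding H_def D_def .
qed

theorem mainTheorem6:
  fixes B :: enat
  assumes "2 \<le> B"
  shows "weak_UIC \<and> weak_MIC B \<and> (\<forall>c::nat. 1 \<le> c \<longrightarrow> weak_SCP c B)"
  using weak_UIC_holds weak_MIC_holds weak_SCP_holds by blast

end
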